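(* Let $\{p_n\}_{n\ge0}$ be a sequence of real polynomials with $\deg p_n=n$, let $c\in\mathbb{R}$, fix $j\in\mathbb{N}\cup\{0\}$, and let $K_n^{(j,j)}(c,c)=\sum_{i=0}^n \big(p_i^{(j)}(c)\big)^2$. Assume there are real constants $a,b$ such that for every integer $k\ge0$, $p_n^{(k)}(c)\approx C_k(-1)^n n^{ak+b}$ as $n\to\infty$, with $C_k\neq0$ independent of $n$ and $2(ak+b)+1>0$. Let $\lambda_n=\gamma n^2+\delta n$ with $\gamma,\delta\in\mathbb{R}$, and define $$\alpha_n=\sum_{i=j+1}^n(\lambda_i-\lambda_{i-1})K_{i-1}^{(j,j)}(c,c),\qquad n\ge j+1.$$ Then $$\lim_{n\to+\infty}\frac{\alpha_n}{n^{2(aj+b)+3}}=\frac{2\gamma C_j^2}{(2(aj+b)+3)(2(aj+b)+1)}\quad\text{if }\gamma\ne0,$$ $$\lim_{n\to+\infty}\frac{\alpha_n}{n^{2(aj+b+1)}}=\frac{\delta C_j^2}{2(aj+b+1)(2(aj+b)+1)}\quad\text{if }\gamma=0.$$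
   Context: The notation $a_n\approx b_n$ means $\lim_{n\to+\infty}a_n/b_n=1$. *)

theory Defs
  imports "HOL-Analysis.Analysis" "HOL-Computational_Algebra.Polynomial" "HOL-Library.Landau_Symbols"
begin

definition Kjj :: "(nat \<Rightarrow> real poly) \<Rightarrow> nat \<Rightarrow> real \<Rightarrow> nat \<Rightarrow> real" where
  "Kjj p j c n = (\<Sum>i=0..n. (poly ((pderiv ^^ j) (p i)) c)^2)"

end

theory Submission
  imports Defs "HOL-Real_Asymp.Real_Asymp"
begin

text \<open>
  With \<open>s = 2(aj + b) > -1\<close> the hypothesis gives \<open>p_n^(j)(c)^2 ~ C_j^2 n^s\<close>. The
  Stolz--Cesaro theorem acts as a discrete integration of \<open>x^r\<close>: increments \<open>~ L n^r\<close>
  with \<open>r > -1\<close> sum up to \<open>~ L n^(r+1) / (r+1)\<close>. Hence \<open>K_n = K_n^(j,j)(c,c) ~ C_j^2 n^(s+1) / (s+1)\<close>.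
  The increments of \<open>\<alpha>_n\<close> are \<open>(\<lambda>_(n+1) - \<lambda>_n) K_n = (\<gamma>(2n+1) + \<delta>) K_n\<close>, which behave like
  \<open>2\<gamma> n K_n\<close> if \<open>\<gamma> \<noteq> 0\<close> and equal \<open>\<delta> K_n\<close> otherwise, so a second summation gives the
  asymptotics of \<open>\<alpha>_n\<close>.
\<close>

lemma abs_diff_le_of_increments:
  fixes f g :: "nat \<Rightarrow> real"
  assumes "\<And>n. n \<ge> m \<Longrightarrow> \<bar>f (Suc n) - f n\<bar> \<le> g (Suc n) - g n" and "m \<le> n"
  shows "\<bar>f n - f m\<bar> \<le> g n - g m"
  using assms(2)
proof (induction n rule: dec_induct)
  case (step n)
  have "\<bar>f (Suc n) - f m\<bar> \<le> \<bar>f n - f m\<bar> + \<bar>f (Suc n) - f n\<bar>"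
    using abs_triangle_ineq[of "f n - f m" "f (Suc n) - f n"] by simp
  with step assms(1)[of n] show ?case
    by linarith
qed simp

lemma Stolz_Cesaro:
  fixes a b :: "nat \<Rightarrow> real"
  assumes incr: "\<And>n. b n < b (Suc n)" and b_top: "filterlim b at_top sequentially"
    and lim: "(\<lambda>n. (a (Suc n) - a n) / (b (Suc n) - b n)) \<longlonglongrightarrow> L"
  shows "(\<lambda>n. a n / b n) \<longlonglongrightarrow> L"
proof (rule tendstoI)
  fix e :: real assume "e > 0"
  define f where "f n = a n - L * b n" for n
  from tendstoD[OF lim, of "e/2"] \<open>e > 0\<close> obtain N
    where N: "\<And>n. n \<ge> N \<Longrightarrow> \<bar>(a (Suc n) - a n) / (b (Suc n) - b n) - L\<bar> < e/2"
    by (auto simp: eventually_sequentially dist_real_def)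
  have increment: "\<bar>f (Suc n) - f n\<bar> \<le> e/2 * b (Suc n) - e/2 * b n" if "n \<ge> N" for n
  proof -
    have "\<bar>f (Suc n) - f n\<bar>
        = \<bar>(a (Suc n) - a n) / (b (Suc n) - b n) - L\<bar> * (b (Suc n) - b n)"
      using incr[of n] by (simp add: f_def abs_mult field_simps)
    also have "\<dots> \<le> e/2 * (b (Suc n) - b n)"
      using N[OF that] incr[of n] by (intro mult_right_mono) auto
    finally show ?thesis
      by (simp add: right_diff_distrib)
  qed
  define M where "M = \<bar>f N\<bar> - e/2 * b N"
  have bound: "\<bar>f n\<bar> \<le> e/2 * b n + M" if "n \<ge> N" for n
    using abs_diff_le_of_increments[of N f "\<lambda>n. e/2 * b n", OF increment that]
      abs_triangle_ineq2[of "f n" "f N"]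
    by (simp add: M_def)
  have "((\<lambda>n. M / b n) \<longlongrightarrow> 0) sequentially"
    by (rule tendsto_divide_0[OF tendsto_const filterlim_at_top_imp_at_infinity[OF b_top]])
  from order_tendstoD(2)[OF this, of "e/2"] \<open>e > 0\<close>
  have "eventually (\<lambda>n. M / b n < e/2) sequentially" by simp
  moreover have "eventually (\<lambda>n. b n > 0) sequentially"
    using b_top by (rule filterlim_at_top_dense[THEN iffD1, rule_format])
  moreover have "eventually (\<lambda>n. n \<ge> N) sequentially"
    by (rule eventually_ge_at_top)
  ultimately show "eventually (\<lambda>n. dist (a n / b n) L < e) sequentially"
  proof eventually_elim
    case (elim n)
    then have "\<bar>f n\<bar> < e * b n"
      using bound[of n] by (simp add: pos_divide_less_eq)
    moreover have "a n / b n - L = f n / b n"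
      using elim by (simp add: f_def field_simps)
    ultimately show ?case
      using elim by (simp add: dist_real_def abs_div pos_divide_less_eq)
  qed
qed

lemma LIMSEQ_div_powr_of_increments:
  fixes A h :: "nat \<Rightarrow> real"
  assumes r: "r > -1"
    and increments: "eventually (\<lambda>n. A (Suc n) - A n = h n) sequentially"
    and lim: "(\<lambda>n. h n / real n powr r) \<longlonglongrightarrow> L"
  shows "(\<lambda>n. A n / real n powr (r + 1)) \<longlonglongrightarrow> L / (r + 1)"
proof (rule Stolz_Cesaro)
  show "real n powr (r + 1) < real (Suc n) powr (r + 1)" for n
    using r by (intro powr_less_mono2) auto
  show "filterlim (\<lambda>n. real n powr (r + 1)) at_top sequentially"
    using r by real_asymp
  have "(\<lambda>n. (real (Suc n) powr (r + 1) - real n powr (r + 1)) / real n powr r) \<longlonglongrightarrow> r + 1"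
    using r by real_asymp
  with lim r have "(\<lambda>n. (h n / real n powr r)
      / ((real (Suc n) powr (r + 1) - real n powr (r + 1)) / real n powr r)) \<longlonglongrightarrow> L / (r + 1)"
    by (intro tendsto_divide) auto
  then show "(\<lambda>n. (A (Suc n) - A n) / (real (Suc n) powr (r + 1) - real n powr (r + 1)))
      \<longlonglongrightarrow> L / (r + 1)"
    by (rule Lim_transform_eventually)
      (use increments eventually_gt_at_top[of 0] in \<open>eventually_elim, simp\<close>)
qed

lemma LIMSEQ_div_powr_Suc:
  fixes f :: "nat \<Rightarrow> real"
  assumes "(\<lambda>n. f n / real n powr r) \<longlonglongrightarrow> L"
  shows "(\<lambda>n. f (Suc n) / real n powr r) \<longlonglongrightarrow> L"
proof -
  have "(\<lambda>n. f (Suc n) / real (Suc n) powr r * (real (Suc n) powr r / real n powr r))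
      \<longlonglongrightarrow> L * 1"
    by (intro tendsto_mult LIMSEQ_Suc[OF assms]) real_asymp
  then show ?thesis
    by simp
qed

lemma LIMSEQ_mult_div_powr:
  fixes f g :: "nat \<Rightarrow> real"
  assumes "(\<lambda>n. f n / real n powr r) \<longlonglongrightarrow> A" and "(\<lambda>n. g n / real n powr t) \<longlonglongrightarrow> B"
  shows "(\<lambda>n. f n * g n / real n powr (r + t)) \<longlonglongrightarrow> A * B"
proof -
  have "(\<lambda>n. f n / real n powr r * (g n / real n powr t)) \<longlonglongrightarrow> A * B"
    using assms by (rule tendsto_mult)
  then show ?thesis
    by (rule Lim_transform_eventually)
      (use eventually_gt_at_top[of 0] in \<open>eventually_elim, simp add: powr_add\<close>)
qed

lemma square_div_powr_LIMSEQ: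
  fixes f :: "nat \<Rightarrow> real"
  assumes "f \<sim>[at_top] (\<lambda>n. C * (-1) ^ n * real n powr e)" and "C \<noteq> 0"
  shows "(\<lambda>n. (f n)\<^sup>2 / real n powr (2 * e)) \<longlonglongrightarrow> C\<^sup>2"
proof -
  have "(\<lambda>n. (f n)\<^sup>2 / real n powr (2 * e))
      \<sim>[at_top] (\<lambda>n. (C * (-1) ^ n * real n powr e)\<^sup>2 / real n powr (2 * e))"
    using assms(1) by (intro asymp_equiv_intros)
  moreover have "eventually (\<lambda>n. (C * (-1) ^ n * real n powr e)\<^sup>2 / real n powr (2 * e) = C\<^sup>2)
      at_top"
    using eventually_gt_at_top[of 0]
    by eventually_elim (simp add: power_mult_distrib powr_powr[symmetric] powr_realpow mult.commute
        flip: power_mult)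
  ultimately show ?thesis
    by (simp add: tendsto_asymp_equiv_cong tendsto_eventually)
qed

theorem proposition1:
  fixes p :: "nat \<Rightarrow> real poly" and c a b \<gamma> \<delta> :: real and j :: nat and C :: "nat \<Rightarrow> real"
    and lam :: "nat \<Rightarrow> real" and \<alpha> :: "nat \<Rightarrow> real"
  assumes deg: "\<And>n. degree (p n) = n"
    and asym: "\<And>k. (\<lambda>n. poly ((pderiv ^^ k) (p n)) c) \<sim>[at_top]
                      (\<lambda>n. C k * (-1) ^ n * real n powr (a * real k + b))"
    and Cnz: "\<And>k. C k \<noteq> 0"
    and pos: "\<And>k. 2 * (a * real k + b) + 1 > 0"
    and lam_def: "\<And>n. lam n = \<gamma> * (real n)\<^sup>2 + \<delta> * real n"
    and alpha_def: "\<And>n. \<alpha> n = (\<Sum>i=j+1..n. (lam i - lam (i - 1)) * Kjj p j c (i - 1))"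
  shows "(\<gamma> \<noteq> 0 \<longrightarrow>
           (\<lambda>n. \<alpha> n / real n powr (2 * (a * real j + b) + 3)) \<longlonglongrightarrow>
             2 * \<gamma> * (C j)\<^sup>2 / ((2 * (a * real j + b) + 3) * (2 * (a * real j + b) + 1)))
       \<and> (\<gamma> = 0 \<longrightarrow>
           (\<lambda>n. \<alpha> n / real n powr (2 * (a * real j + b + 1))) \<longlonglongrightarrow>
             \<delta> * (C j)\<^sup>2 / (2 * (a * real j + b + 1) * (2 * (a * real j + b) + 1)))"
proof -
  define s where "s = 2 * (a * real j + b)"
  define K where "K = Kjj p j c"
  have "s + 1 > 0"
    using pos[of j] by (simp add: s_def)
  have "(\<lambda>n. (poly ((pderiv ^^ j) (p (Suc n))) c)\<^sup>2 / real n powr s) \<longlonglongrightarrow> (C j)\<^sup>2"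
    using LIMSEQ_div_powr_Suc[OF square_div_powr_LIMSEQ[OF asym Cnz]] by (simp add: s_def)
  then have K_lim: "(\<lambda>n. K n / real n powr (s + 1)) \<longlonglongrightarrow> (C j)\<^sup>2 / (s + 1)"
    using \<open>s + 1 > 0\<close> by (intro LIMSEQ_div_powr_of_increments) (auto simp: K_def Kjj_def)
  have alpha_lim: "(\<lambda>n. \<alpha> n / real n powr (s + r + 2))
      \<longlonglongrightarrow> D * (C j)\<^sup>2 / ((s + r + 2) * (s + 1))"
    if "r \<ge> 0" and "(\<lambda>n. (lam (Suc n) - lam n) / real n powr r) \<longlonglongrightarrow> D" for r D
  proof -
    have "(\<lambda>n. (lam (Suc n) - lam n) * K n / real n powr (r + (s + 1)))
        \<longlonglongrightarrow> D * ((C j)\<^sup>2 / (s + 1))"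
      using that(2) K_lim by (rule LIMSEQ_mult_div_powr)
    moreover have "eventually (\<lambda>n. \<alpha> (Suc n) - \<alpha> n = (lam (Suc n) - lam n) * K n) sequentially"
      using eventually_ge_at_top[of j] by eventually_elim (simp add: alpha_def K_def)
    ultimately have "(\<lambda>n. \<alpha> n / real n powr (r + (s + 1) + 1))
        \<longlonglongrightarrow> D * ((C j)\<^sup>2 / (s + 1)) / (r + (s + 1) + 1)"
      using that(1) \<open>s + 1 > 0\<close> by (intro LIMSEQ_div_powr_of_increments) auto
    then show ?thesis
      by (simp add: add_ac mult_ac)
  qed
  have lam_increment: "lam (Suc n) - lam n = \<gamma> * (2 * real n + 1) + \<delta>" for n
    by (simp add: lam_def power2_eq_square algebra_simps)
  show ?thesis
  proof (intro conjI impI)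
    have "(\<lambda>n. (\<gamma> * (2 * real n + 1) + \<delta>) / real n powr 1) \<longlonglongrightarrow> 2 * \<gamma>"
      by real_asymp
    from alpha_lim[OF zero_le_one this[folded lam_increment]]
    show "(\<lambda>n. \<alpha> n / real n powr (2 * (a * real j + b) + 3))
        \<longlonglongrightarrow> 2 * \<gamma> * (C j)\<^sup>2 / ((2 * (a * real j + b) + 3) * (2 * (a * real j + b) + 1))"
      by (simp add: s_def add_ac)
  next
    assume "\<gamma> = 0"
    then have "(\<lambda>n. (\<gamma> * (2 * real n + 1) + \<delta>) / real n powr 0) \<longlonglongrightarrow> \<delta>"
      by real_asymp
    from alpha_lim[OF order_refl this[folded lam_increment]]
    show "(\<lambda>n. \<alpha> n / real n powr (2 * (a * real j + b + 1)))
        \<longlonglongrightarrow> \<delta> * (C j)\<^sup>2 / (2 * (a * real j + b + 1) * (2 * (a * real j + b) + 1))"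
      by (simp add: s_def add_ac)
  qed
qed

end
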